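(* If $1\le m\le 4$, then for every Latin square $K$ on $[m]$ the matroid $M[K]$ is realizable over $\mathbb{R}$.
   Context: A Latin square $K=(k_{i,j})$ on $[m]$ is an $m\times m$ matrix with entries in $[m]$ in which each symbol occurs exactly once in each row and each column. Let $\mathcal{C}[K]=\{\{i,m+j,2m+k_{i,j}\}:1\le i,j\le m\}$, a family of $3$-subsets of $[3m]$. $M[K]$ is the simple matroid on $[3m]$ whose family of all $3$-element circuits is exactly $\mathcal{C}[K]$ and which has rank $3$ when $m\ge 2$ (for $m=1$ it is the rank-$2$ uniform matroid on $\{1,2,3\}$). A matroid is realizable over $\mathbb{R}$ if it is the underlying matroid of an arrangement of hyperplanes over $\mathbb{R}$ (equivalently, the linear matroid of a finite family of vectors in a real vector space). *)

theory Defs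
  imports Complex_Main
begin

definition latin_square :: "nat \<Rightarrow> (nat \<Rightarrow> nat \<Rightarrow> nat) \<Rightarrow> bool" where
  "latin_square m K \<longleftrightarrow>
     (\<forall>i\<in>{1..m}. bij_betw (\<lambda>j. K i j) {1..m} {1..m}) \<and>
     (\<forall>j\<in>{1..m}. bij_betw (\<lambda>i. K i j) {1..m} {1..m})"

definition CK :: "nat \<Rightarrow> (nat \<Rightarrow> nat \<Rightarrow> nat) \<Rightarrow> nat set set" where
  "CK m K = {{i, m + j, 2 * m + K i j} | i j. i \<in> {1..m} \<and> j \<in> {1..m}}"

definition matroid :: "'a set \<Rightarrow> ('a set \<Rightarrow> bool) \<Rightarrow> bool" where
  "matroid E indep \<longleftrightarrow>
     finite E \<and>
     (\<forall>I. indep I \<longrightarrow> I \<subseteq> E) \<and>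
     indep {} \<and>
     (\<forall>I J. indep J \<and> I \<subseteq> J \<longrightarrow> indep I) \<and>
     (\<forall>I J. indep I \<and> indep J \<and> card I < card J \<longrightarrow>
        (\<exists>x\<in>J - I. indep (insert x I)))"

definition circuit :: "'a set \<Rightarrow> ('a set \<Rightarrow> bool) \<Rightarrow> 'a set \<Rightarrow> bool" where
  "circuit E indep C \<longleftrightarrow> C \<subseteq> E \<and> \<not> indep C \<and> (\<forall>x\<in>C. indep (C - {x}))"

definition matroid_rank :: "'a set \<Rightarrow> ('a set \<Rightarrow> bool) \<Rightarrow> nat" where
  "matroid_rank E indep = Max {card I | I. I \<subseteq> E \<and> indep I}"

definition simple_matroid :: "'a set \<Rightarrow> ('a set \<Rightarrow> bool) \<Rightarrow> bool" where
  "simple_matroid E indep \<longleftrightarrow> matroid E indep \<and>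
     (\<forall>S. S \<subseteq> E \<and> card S \<le> 2 \<longrightarrow> indep S)"

definition is_MK :: "nat \<Rightarrow> (nat \<Rightarrow> nat \<Rightarrow> nat) \<Rightarrow> nat set \<Rightarrow> (nat set \<Rightarrow> bool) \<Rightarrow> bool" where
  "is_MK m K E indep \<longleftrightarrow>
     E = {1..3 * m} \<and>
     (if m = 1 then (\<forall>S. indep S \<longleftrightarrow> S \<subseteq> {1,2,3} \<and> card S \<le> 2)
      else simple_matroid E indep \<and>
           {C. circuit E indep C \<and> card C = 3} = CK m K \<and>
           matroid_rank E indep = 3)"

definition lin_indep_family :: "nat \<Rightarrow> (nat \<Rightarrow> nat \<Rightarrow> real) \<Rightarrow> nat set \<Rightarrow> bool" where
  "lin_indep_family d v S \<longleftrightarrow>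
     (\<forall>c. (\<forall>k<d. (\<Sum>i\<in>S. c i * v i k) = 0) \<longrightarrow> (\<forall>i\<in>S. c i = 0))"

definition real_realizable :: "nat set \<Rightarrow> (nat set \<Rightarrow> bool) \<Rightarrow> bool" where
  "real_realizable E indep \<longleftrightarrow>
     (\<exists>d v. \<forall>S. indep S \<longleftrightarrow> S \<subseteq> E \<and> lin_indep_family d v S)"

end

theory Submission
  imports Defs "HOL-Analysis.Analysis"
begin

(* Realize the 3m points by vectors of R^3. If no two of them are parallel and three distinct
   ones are linearly dependent exactly when they form a triple of C[K], then the independent sets
   of their linear matroid are the sets of size at most 2 together with the triples outside C[K]:
   for m >= 2 a simple matroid of rank 3 whose 3-circuits are C[K], for m = 1 the matroid U(2,3).
   Permuting the rows and columns of K relabels the ground set bijectively, and every Latin square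
   is isotopic to a reduced one. There are only seven reduced Latin squares of order at most 4;
   for each of them an integer configuration is given explicitly and checked by evaluation. *)

lemma matroid_vector_family:
  fixes f :: "'i \<Rightarrow> 'a::real_vector"
  assumes "finite E"
  shows "matroid E (\<lambda>S. S \<subseteq> E \<and> inj_on f S \<and> independent (f ` S))"
proof -
  have exchange: "\<exists>x\<in>J - I. insert x I \<subseteq> E \<and> inj_on f (insert x I) \<and> independent (f ` insert x I)"
    if I: "I \<subseteq> E" "inj_on f I" "independent (f ` I)"
      and J: "J \<subseteq> E" "inj_on f J" "independent (f ` J)" and lt: "card I < card J" for I J
  proof (rule ccontr)
    assume none: "\<not> ?thesis"
    have "f ` J \<subseteq> span (f ` I)"
    proof
      fix w assume "w \<in> f ` J"
      then obtain x where x: "x \<in> J" "w = f x" by blast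
      show "w \<in> span (f ` I)"
      proof (cases "f x \<in> f ` I")
        case True
        then show ?thesis using x by (simp add: span_base)
      next
        case False
        with x I J(1) have "x \<in> J - I" "insert x I \<subseteq> E" "inj_on f (insert x I)" by auto
        with none have "\<not> independent (insert (f x) (f ` I))" by auto
        with False I(3) show ?thesis using x(2) by (simp add: independent_insert)
      qed
    qed
    moreover have "finite (f ` I)"
      using I(1) assms by (simp add: finite_subset)
    ultimately have "card (f ` J) \<le> card (f ` I)"
      using independent_span_bound J(3) by blast
    then show False using I J lt by (simp add: card_image)
  qed
  have hereditary: "inj_on f I \<and> independent (f ` I)"
    if "inj_on f J" "independent (f ` J)" "I \<subseteq> J" for I J
    using that by (meson image_mono independent_mono inj_on_subset)
  show ?thesis
    unfolding matroid_def
  proof (intro conjI allI impI; (elim conjE)?)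
    fix I J
    assume "I \<subseteq> J" "J \<subseteq> E" "inj_on f J" "independent (f ` J)"
    with hereditary show "I \<subseteq> E" "inj_on f I" "independent (f ` I)" by blast+
  qed (use assms exchange independent_empty in auto)
qed

lemma independent_family_iff:
  fixes f :: "'i \<Rightarrow> 'a::real_vector"
  assumes "finite S"
  shows "(\<forall>c. (\<Sum>i\<in>S. c i *\<^sub>R f i) = 0 \<longrightarrow> (\<forall>i\<in>S. c i = 0))
    \<longleftrightarrow> inj_on f S \<and> independent (f ` S)"
proof
  assume scalars_zero: "\<forall>c. (\<Sum>i\<in>S. c i *\<^sub>R f i) = 0 \<longrightarrow> (\<forall>i\<in>S. c i = 0)"
  have inj: "inj_on f S"
  proof (rule inj_onI, rule ccontr)
    fix i j assume ij: "i \<in> S" "j \<in> S" "f i = f j" "i \<noteq> j"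
    define c :: "'i \<Rightarrow> real" where "c k = (if k = i then 1 else if k = j then -1 else 0)" for k
    have "(\<Sum>k\<in>S. c k *\<^sub>R f k) = (\<Sum>k\<in>{i, j}. c k *\<^sub>R f k)"
      using assms ij by (intro sum.mono_neutral_right) (auto simp: c_def)
    also have "\<dots> = 0" using ij by (simp add: c_def)
    finally show False using scalars_zero ij by (force simp: c_def)
  qed
  moreover have "independent (f ` S)"
  proof
    assume "dependent (f ` S)"
    then obtain u where u: "\<exists>w\<in>f ` S. u w \<noteq> 0" "(\<Sum>w\<in>f ` S. u w *\<^sub>R w) = 0"
      using assms by (auto simp: dependent_finite)
    then have "(\<Sum>i\<in>S. u (f i) *\<^sub>R f i) = 0"
      using inj by (simp add: sum.reindex)
    with scalars_zero u(1) show False by auto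
  qed
  ultimately show "inj_on f S \<and> independent (f ` S)" ..
next
  assume indep: "inj_on f S \<and> independent (f ` S)"
  show "\<forall>c. (\<Sum>i\<in>S. c i *\<^sub>R f i) = 0 \<longrightarrow> (\<forall>i\<in>S. c i = 0)"
  proof (intro allI impI)
    fix c assume c: "(\<Sum>i\<in>S. c i *\<^sub>R f i) = 0"
    define u where "u w = c (the_inv_into S f w)" for w
    have "(\<Sum>w\<in>f ` S. u w *\<^sub>R w) = (\<Sum>i\<in>S. c i *\<^sub>R f i)"
      using indep by (simp add: sum.reindex u_def the_inv_into_f_f)
    then have "\<forall>w\<in>f ` S. u w = 0"
      using c indep assms by (auto simp: dependent_finite)
    then show "\<forall>i\<in>S. c i = 0"
      using indep by (auto simp: u_def the_inv_into_f_f)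
  qed
qed

lemma all_less_3: "(\<forall>k<3. P k) \<longleftrightarrow> P 0 \<and> P 1 \<and> P (2::nat)"
  by (auto simp: less_Suc_eq numeral_3_eq_3 numeral_2_eq_2)

definition point3 :: "(nat \<Rightarrow> nat \<Rightarrow> real) \<Rightarrow> nat \<Rightarrow> real \<times> real \<times> real" where
  "point3 v i = (v i 0, v i 1, v i 2)"

lemma lin_indep_family_3_iff:
  assumes "finite S"
  shows "lin_indep_family 3 v S \<longleftrightarrow> inj_on (point3 v) S \<and> independent (point3 v ` S)"
proof -
  have "(\<Sum>i\<in>S. c i *\<^sub>R point3 v i) =
      ((\<Sum>i\<in>S. c i * v i 0), (\<Sum>i\<in>S. c i * v i 1), (\<Sum>i\<in>S. c i * v i 2))" for c
    by (simp add: point3_def prod_eq_iff fst_sum snd_sum)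
  then show ?thesis
    unfolding lin_indep_family_def independent_family_iff[OF assms, symmetric] all_less_3
    by (simp add: zero_prod_def)
qed

lemma matroid_lin_indep_family_3:
  assumes "finite E"
  shows "matroid E (\<lambda>S. S \<subseteq> E \<and> lin_indep_family 3 v S)"
proof -
  have "S \<subseteq> E \<and> lin_indep_family 3 v S \<longleftrightarrow>
      S \<subseteq> E \<and> inj_on (point3 v) S \<and> independent (point3 v ` S)" for S
    using lin_indep_family_3_iff[of S v] finite_subset[OF _ assms] by blast
  then show ?thesis
    using matroid_vector_family[OF assms, of "point3 v"] by simp
qed

lemma card_le_3_if_lin_indep_family_3:
  assumes "finite S" "lin_indep_family 3 v S"
  shows "card S \<le> 3"
proof -
  have "inj_on (point3 v) S" "independent (point3 v ` S)"
    using assms lin_indep_family_3_iff by blast+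
  then show ?thesis
    using independent_bound[of "point3 v ` S"] by (simp add: card_image)
qed

lemma lin_indep_family_subset:
  assumes "lin_indep_family d v T" "S \<subseteq> T" "finite T"
  shows "lin_indep_family d v S"
  unfolding lin_indep_family_def
proof (intro allI impI)
  fix c assume rel: "\<forall>k<d. (\<Sum>i\<in>S. c i * v i k) = 0"
  let ?c = "\<lambda>i. if i \<in> S then c i else 0"
  have "(\<Sum>i\<in>T. ?c i * v i k) = (\<Sum>i\<in>S. c i * v i k)" for k
    using assms(2,3) by (intro sum.mono_neutral_cong_right) auto
  then have "\<forall>i\<in>T. ?c i = 0"
    using assms(1)[unfolded lin_indep_family_def, rule_format, of ?c] rel by simp
  then show "\<forall>i\<in>S. c i = 0"
    using assms(2) by (metis subsetD)
qed

definition cross :: "(nat \<Rightarrow> nat \<Rightarrow> 'a::comm_ring_1) \<Rightarrow> nat \<Rightarrow> nat \<Rightarrow> nat \<Rightarrow> 'a" where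
  "cross v a b k =
     (if k = 0 then v a 1 * v b 2 - v a 2 * v b 1
      else if k = 1 then v a 2 * v b 0 - v a 0 * v b 2
      else v a 0 * v b 1 - v a 1 * v b 0)"

definition det3 :: "(nat \<Rightarrow> nat \<Rightarrow> 'a::comm_ring_1) \<Rightarrow> nat \<Rightarrow> nat \<Rightarrow> nat \<Rightarrow> 'a" where
  "det3 v a b c = v a 0 * cross v b c 0 + v a 1 * cross v b c 1 + v a 2 * cross v b c 2"

lemma cross_simps:
  "cross v a b 0 = v a 1 * v b 2 - v a 2 * v b 1"
  "cross v a b 1 = v a 2 * v b 0 - v a 0 * v b 2"
  "cross v a b 2 = v a 0 * v b 1 - v a 1 * v b 0"
  by (simp_all add: cross_def)

lemma cross_self: "cross v a a k = 0"
  by (simp add: cross_def mult.commute)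

lemma cross_swap: "cross v b a k = - cross v a b k"
  by (simp add: cross_def algebra_simps)

lemma det3_swap: "det3 v b a c = - det3 v a b c"
  by (simp add: det3_def cross_def algebra_simps)

lemma det3_cycle: "det3 v c a b = det3 v a b c"
  by (simp add: det3_def cross_def algebra_simps)

lemma cross_annihilates:
  fixes v :: "nat \<Rightarrow> nat \<Rightarrow> real"
  assumes "\<And>i. i < 3 \<Longrightarrow> x * v a i + y * v b i = 0"
  shows "x * cross v a b k = 0"
proof -
  have "x * v a 0 = - y * v b 0" "x * v a 1 = - y * v b 1" "x * v a 2 = - y * v b 2"
    using assms[of 0] assms[of 1] assms[of 2] by (simp_all add: eq_neg_iff_add_eq_0)
  then have "x * (v a 1 * v b 2 - v a 2 * v b 1) = 0" "x * (v a 2 * v b 0 - v a 0 * v b 2) = 0"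
    "x * (v a 0 * v b 1 - v a 1 * v b 0) = 0"
    by algebra+
  then show ?thesis
    unfolding cross_def by (simp only: split: if_split) blast
qed

lemma det3_annihilates:
  fixes v :: "nat \<Rightarrow> nat \<Rightarrow> real"
  assumes "\<And>i. i < 3 \<Longrightarrow> x * v a i + (y * v b i + z * v c i) = 0"
  shows "x * det3 v a b c = 0"
proof -
  have "x * v a 0 + (y * v b 0 + z * v c 0) = 0" "x * v a 1 + (y * v b 1 + z * v c 1) = 0"
    "x * v a 2 + (y * v b 2 + z * v c 2) = 0"
    using assms by simp_all
  then show ?thesis
    unfolding det3_def cross_simps by algebra
qed

lemma cofactor_expansion:
  fixes v :: "nat \<Rightarrow> nat \<Rightarrow> real"
  assumes "i < 3" "k < 3"
  shows "cross v b c k * v a i + cross v c a k * v b i + cross v a b k * v c i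
    = (if i = k then det3 v a b c else 0)"
proof -
  have "\<forall>i<3. \<forall>k<3. cross v b c k * v a i + cross v c a k * v b i + cross v a b k * v c i
      = (if i = k then det3 v a b c else 0)"
    unfolding all_less_3 by (intro conjI; simp add: det3_def cross_def; algebra)
  then show ?thesis using assms by blast
qed

lemma lin_indep_family_pair:
  assumes "k < 3" "cross v a b k \<noteq> 0"
  shows "lin_indep_family 3 v {a, b}"
proof -
  have "a \<noteq> b"
    using assms(2) by (auto simp: cross_self)
  moreover have "c a = 0 \<and> c b = 0" if rel: "\<forall>i<3. c a * v a i + c b * v b i = 0" for c
  proof -
    have "c a * cross v a b k = 0"
      by (rule cross_annihilates[where y = "c b"]) (use rel in auto)
    moreover have "c b * cross v b a k = 0"
      by (rule cross_annihilates[where y = "c a"]) (use rel in \<open>simp add: add.commute\<close>)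
    ultimately show ?thesis using assms(2) by (simp add: cross_swap[of v b a])
  qed
  ultimately show ?thesis
    by (simp add: lin_indep_family_def)
qed

lemma lin_indep_family_triple_iff:
  assumes distinct: "a \<noteq> b" "a \<noteq> c" "b \<noteq> c" and "k < 3" "cross v b c k \<noteq> 0"
  shows "lin_indep_family 3 v {a, b, c} \<longleftrightarrow> det3 v a b c \<noteq> 0"
proof
  assume indep: "lin_indep_family 3 v {a, b, c}"
  let ?x = "cross v b c k" and ?y = "cross v c a k" and ?z = "cross v a b k"
  show "det3 v a b c \<noteq> 0"
  proof
    assume "det3 v a b c = 0"
    then have "\<forall>i<3. ?x * v a i + (?y * v b i + ?z * v c i) = 0"
      using cofactor_expansion[OF _ \<open>k < 3\<close>, of _ v b c a] by (simp add: add.assoc)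
    moreover define u where "u i = (if i = a then ?x else if i = b then ?y else ?z)" for i
    ultimately have "\<forall>k<3. (\<Sum>i\<in>{a, b, c}. u i * v i k) = 0"
      using distinct by (simp add: u_def)
    then have "u a = 0"
      using indep[unfolded lin_indep_family_def, rule_format, of u a] by simp
    with assms show False by (simp add: u_def)
  qed
next
  assume det: "det3 v a b c \<noteq> 0"
  have "u a = 0 \<and> u b = 0 \<and> u c = 0"
    if rel: "\<forall>i<3. u a * v a i + (u b * v b i + u c * v c i) = 0" for u
  proof -
    have rel': "u a * v a i + (u b * v b i + u c * v c i) = 0" if "i < 3" for i
      using rel that by blast
    have "u a * det3 v a b c = 0"
      by (rule det3_annihilates[where y = "u b" and z = "u c"]) (fact rel')
    moreover have "u b * det3 v b a c = 0"
      by (rule det3_annihilates[where y = "u a" and z = "u c"]) (metis rel' add.left_commute)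
    moreover have "u c * det3 v c a b = 0"
      by (rule det3_annihilates[where y = "u a" and z = "u b"]) (metis rel' add.left_commute add.commute)
    moreover have "det3 v b a c = - det3 v a b c" "det3 v c a b = det3 v a b c"
      by (rule det3_swap, rule det3_cycle)
    ultimately show ?thesis
      using det by auto
  qed
  then show "lin_indep_family 3 v {a, b, c}"
    using distinct by (simp add: lin_indep_family_def)
qed

definition realizes_triples :: "nat set \<Rightarrow> nat set set \<Rightarrow> (nat \<Rightarrow> nat \<Rightarrow> real) \<Rightarrow> bool" where
  "realizes_triples E \<C> v \<longleftrightarrow>
     (\<forall>a\<in>E. \<forall>b\<in>E. a \<noteq> b \<longrightarrow> (\<exists>k<3. cross v a b k \<noteq> 0)) \<and>
     (\<forall>a\<in>E. \<forall>b\<in>E. \<forall>c\<in>E. a \<noteq> b \<and> a \<noteq> c \<and> b \<noteq> c \<longrightarrow> (det3 v a b c = 0 \<longleftrightarrow> {a, b, c} \<in> \<C>))"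

lemma lin_indep_family_iff_realizes_triples:
  assumes "realizes_triples E \<C> v" "S \<subseteq> E" "2 \<le> card E"
  shows "lin_indep_family 3 v S \<longleftrightarrow> card S \<le> 2 \<or> card S = 3 \<and> S \<notin> \<C>"
proof -
  have "finite E"
    using assms(3) card.infinite by fastforce
  then have "finite S"
    using assms(2) finite_subset by blast
  consider "card S \<le> 2" | "card S = 3" | "card S > 3" by linarith
  then show ?thesis
  proof cases
    case 1
    then obtain B where "S \<subseteq> B" "B \<subseteq> E" "card B = 2"
      using exists_subset_between[OF _ assms(3,2) \<open>finite E\<close>] by blast
    then obtain a b where "a \<in> E" "b \<in> E" "a \<noteq> b" "S \<subseteq> {a, b}"
      by (auto simp: card_2_iff)
    then have "lin_indep_family 3 v {a, b}"
      using assms(1) lin_indep_family_pair unfolding realizes_triples_def by blast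
    then show ?thesis
      using 1 \<open>S \<subseteq> {a, b}\<close> lin_indep_family_subset by blast
  next
    case 2
    then obtain a b c where S: "S = {a, b, c}" "a \<noteq> b" "a \<noteq> c" "b \<noteq> c"
      by (auto simp: card_3_iff)
    then have "a \<in> E" "b \<in> E" "c \<in> E" using assms(2) by auto
    then obtain k where "k < 3" "cross v b c k \<noteq> 0" "det3 v a b c = 0 \<longleftrightarrow> S \<in> \<C>"
      using assms(1) S unfolding realizes_triples_def by blast
    then show ?thesis
      using lin_indep_family_triple_iff[OF S(2-4)] S(1) 2 by auto
  next
    case 3
    then show ?thesis
      using card_le_3_if_lin_indep_family_3 \<open>finite S\<close> by fastforce
  qed
qed

lemma distinct_triple_wlog:
  fixes a b c :: "'a::linorder"
  assumes swap: "\<And>x y z. P x y z \<Longrightarrow> P y x z" and cycle: "\<And>x y z. P x y z \<Longrightarrow> P z x y"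
    and sorted: "\<And>x y z. x < y \<Longrightarrow> y < z \<Longrightarrow> P x y z"
    and "a \<noteq> b" "a \<noteq> c" "b \<noteq> c"
  shows "P a b c"
  using assms(4-6) by (metis swap cycle sorted linorder_neqE)

lemma realizes_triples_sortedI:
  fixes E :: "nat set"
  assumes pairs: "\<And>a b. a \<in> E \<Longrightarrow> b \<in> E \<Longrightarrow> a < b \<Longrightarrow> \<exists>k<3. cross v a b k \<noteq> 0"
    and triples: "\<And>a b c. a \<in> E \<Longrightarrow> b \<in> E \<Longrightarrow> c \<in> E \<Longrightarrow> a < b \<Longrightarrow> b < c \<Longrightarrow>
      det3 v a b c = 0 \<longleftrightarrow> {a, b, c} \<in> \<C>"
  shows "realizes_triples E \<C> v"
proof -
  define P where "P x y z \<longleftrightarrow> x \<in> E \<longrightarrow> y \<in> E \<longrightarrow> z \<in> E \<longrightarrow>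
      (det3 v x y z = 0 \<longleftrightarrow> {x, y, z} \<in> \<C>)" for x y z
  have "P a b c" if "a \<noteq> b" "a \<noteq> c" "b \<noteq> c" for a b c
  proof (rule distinct_triple_wlog[OF _ _ _ that])
    show "P y x z" if "P x y z" for x y z
      using that det3_swap[of v x y z] unfolding P_def by (simp add: insert_commute)
    show "P z x y" if "P x y z" for x y z
      using that det3_cycle[of v z x y] unfolding P_def by (simp add: insert_commute)
    show "P x y z" if "x < y" "y < z" for x y z
      using that triples unfolding P_def by simp
  qed
  moreover have "\<exists>k<3. cross v a b k \<noteq> 0" if "a \<in> E" "b \<in> E" "a \<noteq> b" for a b
    using pairs[of a b] pairs[of b a] cross_swap[of v a b] that by (cases "a < b") auto
  ultimately show ?thesis
    unfolding realizes_triples_def P_def by blast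
qed

lemma circuit_card_3_iff:
  assumes "simple_matroid E indep"
  shows "circuit E indep C \<and> card C = 3 \<longleftrightarrow> C \<subseteq> E \<and> card C = 3 \<and> \<not> indep C"
proof -
  have "indep (C - {x})" if "C \<subseteq> E" "card C = 3" "x \<in> C" for x
  proof -
    have "finite C" using \<open>card C = 3\<close> card.infinite by fastforce
    then have "card (C - {x}) \<le> 2" using that by simp
    then show ?thesis using assms that unfolding simple_matroid_def by blast
  qed
  then show ?thesis
    unfolding circuit_def by auto
qed

lemma matroid_rank_eqI:
  assumes "finite E" "\<And>I. I \<subseteq> E \<Longrightarrow> indep I \<Longrightarrow> card I \<le> r"
    and "I \<subseteq> E" "indep I" "card I = r"
  shows "matroid_rank E indep = r"
  unfolding matroid_rank_def
proof (rule Max_eqI)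
  have "{card I |I. I \<subseteq> E \<and> indep I} \<subseteq> card ` Pow E" by auto
  then show "finite {card I |I. I \<subseteq> E \<and> indep I}"
    using assms(1) finite_surj by blast
qed (use assms in auto)

lemma CK_cases:
  assumes "C \<in> CK m K"
  obtains i j where "i \<in> {1..m}" "j \<in> {1..m}" "C = {i, m + j, 2 * m + K i j}"
  using assms unfolding CK_def by blast

lemma CK_subset:
  assumes range: "\<forall>i\<in>{1..m}. \<forall>j\<in>{1..m}. K i j \<in> {1..m}" and "C \<in> CK m K"
  shows "C \<subseteq> {1..3 * m}" "card C = 3"
proof -
  obtain i j where ij: "i \<in> {1..m}" "j \<in> {1..m}" "C = {i, m + j, 2 * m + K i j}"
    using CK_cases[OF \<open>C \<in> CK m K\<close>] .
  moreover have "K i j \<in> {1..m}" using range ij by blast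
  ultimately show "C \<subseteq> {1..3 * m}" "card C = 3" by auto
qed

lemma CK_first_block_unique:
  assumes "C \<in> CK m K" "a \<in> C" "b \<in> C" "a \<le> m" "b \<le> m"
  shows "a = b"
  using assms by (elim CK_cases) auto

lemma sorted_triple_eq:
  fixes a b c x y z :: "'a::linorder"
  assumes "a < b" "b < c" "x < y" "y < z" "{a, b, c} = {x, y, z}"
  shows "a = x \<and> b = y \<and> c = z"
  using assms by (metis insertCI insertE singletonD not_less_iff_gr_or_eq order.strict_trans)

lemma CK_sorted_iff:
  assumes "a < b" "b < c" "1 \<le> a" and range: "\<forall>i\<in>{1..m}. \<forall>j\<in>{1..m}. K i j \<in> {1..m}"
  shows "{a, b, c} \<in> CK m K \<longleftrightarrow> a \<le> m \<and> m < b \<and> b \<le> 2 * m \<and> c = 2 * m + K a (b - m)"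
proof
  assume "{a, b, c} \<in> CK m K"
  then obtain i j where ij: "i \<in> {1..m}" "j \<in> {1..m}" "{a, b, c} = {i, m + j, 2 * m + K i j}"
    by (rule CK_cases)
  moreover have "K i j \<in> {1..m}" using range ij by blast
  ultimately have "a = i" "b = m + j" "c = 2 * m + K i j"
    using sorted_triple_eq[OF assms(1,2), of i "m + j" "2 * m + K i j"] by auto
  then show "a \<le> m \<and> m < b \<and> b \<le> 2 * m \<and> c = 2 * m + K a (b - m)"
    using ij by auto
next
  assume "a \<le> m \<and> m < b \<and> b \<le> 2 * m \<and> c = 2 * m + K a (b - m)"
  then have "a \<in> {1..m}" "b - m \<in> {1..m}" "{a, b, c} = {a, m + (b - m), 2 * m + K a (b - m)}"
    using assms(3) by auto
  then show "{a, b, c} \<in> CK m K"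
    unfolding CK_def by blast
qed

lemma is_MK_of_realizes_triples:
  assumes "1 \<le> m" and range: "\<forall>i\<in>{1..m}. \<forall>j\<in>{1..m}. K i j \<in> {1..m}"
    and realizes: "realizes_triples {1..3 * m} (CK m K) v"
  shows "is_MK m K {1..3 * m} (\<lambda>S. S \<subseteq> {1..3 * m} \<and> lin_indep_family 3 v S)"
proof -
  define E where "E = {1..3 * m}"
  define indep where "indep S \<longleftrightarrow> S \<subseteq> E \<and> lin_indep_family 3 v S" for S
  have indep_iff: "indep S \<longleftrightarrow> S \<subseteq> E \<and> (card S \<le> 2 \<or> card S = 3 \<and> S \<notin> CK m K)" for S
    using lin_indep_family_iff_realizes_triples[OF realizes[folded E_def]] \<open>1 \<le> m\<close>
    unfolding indep_def E_def by auto
  show ?thesis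
  proof (cases "m = 1")
    case True
    then have "E = {1, 2, 3}" "CK m K = {E}"
      using range by (auto simp: E_def CK_def)
    then have "indep S \<longleftrightarrow> S \<subseteq> {1, 2, 3} \<and> card S \<le> 2" for S
      using indep_iff[of S] card_subset_eq[of E S] by auto
    with True show ?thesis
      unfolding is_MK_def indep_def E_def by simp
  next
    case False
    then have "2 \<le> m" using \<open>1 \<le> m\<close> by simp
    have "matroid E indep"
      unfolding indep_def[abs_def] E_def by (rule matroid_lin_indep_family_3) simp
    then have simple: "simple_matroid E indep"
      unfolding simple_matroid_def using indep_iff by auto
    have "{C. circuit E indep C \<and> card C = 3} = CK m K"
      using circuit_card_3_iff[OF simple] indep_iff CK_subset[OF range] by (auto simp: E_def)
    moreover have "matroid_rank E indep = 3"
    proof (rule matroid_rank_eqI)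
      show "{1, 2, m + 1} \<subseteq> E" "card {1, 2, m + 1} = 3"
        using \<open>2 \<le> m\<close> by (auto simp: E_def)
      have "{1, 2, m + 1} \<notin> CK m K"
        using CK_first_block_unique[of "{1, 2, m + 1}" m K 1 2] \<open>2 \<le> m\<close> by auto
      then show "indep {1, 2, m + 1}"
        using indep_iff \<open>{1, 2, m + 1} \<subseteq> E\<close> \<open>card {1, 2, m + 1} = 3\<close> by simp
    qed (use indep_iff in \<open>auto simp: E_def\<close>)
    ultimately show ?thesis
      using simple False unfolding is_MK_def indep_def E_def by simp
  qed
qed

lemma realizable_MK_of_realizes_triples:
  assumes "1 \<le> m" "\<forall>i\<in>{1..m}. \<forall>j\<in>{1..m}. K i j \<in> {1..m}"
    and "realizes_triples {1..3 * m} (CK m K) v"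
  shows "\<exists>E indep. is_MK m K E indep \<and> real_realizable E indep"
proof (intro exI conjI)
  show "is_MK m K {1..3 * m} (\<lambda>S. S \<subseteq> {1..3 * m} \<and> lin_indep_family 3 v S)"
    using is_MK_of_realizes_triples[OF assms] .
  show "real_realizable {1..3 * m} (\<lambda>S. S \<subseteq> {1..3 * m} \<and> lin_indep_family 3 v S)"
    unfolding real_realizable_def by blast
qed

lemma cross_reindex: "cross (\<lambda>a. v (p a)) a b k = cross v (p a) (p b) k"
  by (simp add: cross_def)

lemma det3_reindex: "det3 (\<lambda>a. v (p a)) a b c = det3 v (p a) (p b) (p c)"
  by (simp add: det3_def cross_def)

lemma realizes_triples_reindex:
  assumes bij: "bij_betw p E E'" and "\<C> \<subseteq> Pow E"
    and realizes: "realizes_triples E' ((\<lambda>C. p ` C) ` \<C>) v"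
  shows "realizes_triples E \<C> (\<lambda>a. v (p a))"
proof -
  have p: "p a \<in> E'" "p a = p b \<longleftrightarrow> a = b" if "a \<in> E" "b \<in> E" for a b
    using bij that by (auto simp: bij_betw_def inj_on_eq_iff)
  have "p ` C \<in> (\<lambda>C. p ` C) ` \<C> \<longleftrightarrow> C \<in> \<C>" if "C \<subseteq> E" for C
    using bij that \<open>\<C> \<subseteq> Pow E\<close> by (auto simp: bij_betw_def inj_on_image_eq_iff)
  from this[of "{_, _, _}"] show ?thesis
    using realizes p unfolding realizes_triples_def cross_reindex det3_reindex
    by (simp add: Ball_def)
qed

definition isotopy_relabel :: "nat \<Rightarrow> (nat \<Rightarrow> nat) \<Rightarrow> (nat \<Rightarrow> nat) \<Rightarrow> nat \<Rightarrow> nat" where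
  "isotopy_relabel m \<alpha> \<beta> a = (if a \<le> m then \<alpha> a else if a \<le> 2 * m then m + \<beta> (a - m) else a)"

lemma bij_betw_isotopy_relabel:
  assumes \<alpha>: "bij_betw \<alpha> {1..m} {1..m}" and \<beta>: "bij_betw \<beta> {1..m} {1..m}"
  shows "bij_betw (isotopy_relabel m \<alpha> \<beta>) {1..3 * m} {1..3 * m}"
proof -
  let ?p = "isotopy_relabel m \<alpha> \<beta>"
  have rows: "bij_betw ?p {1..m} {1..m}"
    using \<alpha> by (subst bij_betw_cong[of _ _ \<alpha>]) (simp_all add: isotopy_relabel_def)
  have shift: "bij_betw ((+) m) {1..m} {m + 1..2 * m}"
    by simp
  have "bij_betw ((+) m \<circ> \<beta>) {1..m} {m + 1..2 * m}"
    using \<beta> shift by (rule bij_betw_trans)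
  then have "bij_betw (?p \<circ> (+) m) {1..m} {m + 1..2 * m}"
    by (subst bij_betw_cong[of _ _ "(+) m \<circ> \<beta>"]) (simp_all add: isotopy_relabel_def)
  then have columns: "bij_betw ?p {m + 1..2 * m} {m + 1..2 * m}"
    using bij_betw_comp_iff[OF shift] by blast
  have symbols: "bij_betw ?p {2 * m + 1..3 * m} {2 * m + 1..3 * m}"
    by (subst bij_betw_cong[of _ _ id]) (simp_all add: isotopy_relabel_def)
  have "bij_betw ?p ({1..m} \<union> {m + 1..2 * m}) ({1..m} \<union> {m + 1..2 * m})"
    by (rule bij_betw_combine[OF rows columns]) auto
  then have "bij_betw ?p ({1..m} \<union> {m + 1..2 * m} \<union> {2 * m + 1..3 * m})
      ({1..m} \<union> {m + 1..2 * m} \<union> {2 * m + 1..3 * m})"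
    by (rule bij_betw_combine[OF _ symbols]) auto
  moreover have "{1..m} \<union> {m + 1..2 * m} \<union> {2 * m + 1..3 * m} = {1..3 * m}"
    by auto
  ultimately show ?thesis
    by simp
qed

lemma CK_isotopic:
  assumes \<alpha>: "bij_betw \<alpha> {1..m} {1..m}" and \<beta>: "bij_betw \<beta> {1..m} {1..m}"
    and KL: "\<forall>i\<in>{1..m}. \<forall>j\<in>{1..m}. K i j = L (\<alpha> i) (\<beta> j)"
    and range: "\<forall>i\<in>{1..m}. \<forall>j\<in>{1..m}. K i j \<in> {1..m}"
  shows "CK m L = (\<lambda>C. isotopy_relabel m \<alpha> \<beta> ` C) ` CK m K"
proof -
  let ?p = "isotopy_relabel m \<alpha> \<beta>"
  have image: "?p ` {i, m + j, 2 * m + K i j} = {\<alpha> i, m + \<beta> j, 2 * m + L (\<alpha> i) (\<beta> j)}"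
    if "i \<in> {1..m}" "j \<in> {1..m}" for i j
  proof -
    have "\<alpha> i \<in> {1..m}" "K i j \<in> {1..m}"
      using that \<alpha> range by (auto dest: bij_betwE)
    then have "?p i = \<alpha> i" "?p (m + j) = m + \<beta> j" "?p (2 * m + K i j) = 2 * m + K i j"
      using that by (simp_all add: isotopy_relabel_def)
    then show ?thesis
      using that KL by simp
  qed
  show ?thesis
  proof (intro equalityI subsetI)
    fix C assume "C \<in> CK m L"
    then obtain x y where xy: "x \<in> {1..m}" "y \<in> {1..m}" "C = {x, m + y, 2 * m + L x y}"
      by (rule CK_cases)
    then have "x \<in> \<alpha> ` {1..m}" "y \<in> \<beta> ` {1..m}"
      using \<alpha> \<beta> by (simp_all add: bij_betw_imp_surj_on)
    then obtain i j where ij: "i \<in> {1..m}" "j \<in> {1..m}" "x = \<alpha> i" "y = \<beta> j"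
      by blast
    then have "{i, m + j, 2 * m + K i j} \<in> CK m K"
      unfolding CK_def by blast
    moreover have "C = ?p ` {i, m + j, 2 * m + K i j}"
      using image[OF ij(1,2)] xy ij by simp
    ultimately show "C \<in> (\<lambda>C. ?p ` C) ` CK m K"
      by blast
  next
    fix C assume "C \<in> (\<lambda>C. ?p ` C) ` CK m K"
    then obtain i j where ij: "i \<in> {1..m}" "j \<in> {1..m}" "C = ?p ` {i, m + j, 2 * m + K i j}"
      by (auto elim!: CK_cases)
    moreover have "\<alpha> i \<in> {1..m}" "\<beta> j \<in> {1..m}"
      using ij \<alpha> \<beta> by (auto dest: bij_betwE)
    ultimately show "C \<in> CK m L"
      unfolding CK_def image[OF ij(1,2)] by blast
  qed
qed

lemma realizes_triples_isotopic:
  assumes \<alpha>: "bij_betw \<alpha> {1..m} {1..m}" and \<beta>: "bij_betw \<beta> {1..m} {1..m}"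
    and KL: "\<forall>i\<in>{1..m}. \<forall>j\<in>{1..m}. K i j = L (\<alpha> i) (\<beta> j)"
    and range: "\<forall>i\<in>{1..m}. \<forall>j\<in>{1..m}. K i j \<in> {1..m}"
    and "realizes_triples {1..3 * m} (CK m L) v"
  shows "realizes_triples {1..3 * m} (CK m K) (\<lambda>a. v (isotopy_relabel m \<alpha> \<beta> a))"
proof (rule realizes_triples_reindex[OF bij_betw_isotopy_relabel[OF \<alpha> \<beta>]])
  show "CK m K \<subseteq> Pow {1..3 * m}"
    using CK_subset(1)[OF range] by blast
  show "realizes_triples {1..3 * m} ((\<lambda>C. isotopy_relabel m \<alpha> \<beta> ` C) ` CK m K) v"
    using \<open>realizes_triples {1..3 * m} (CK m L) v\<close>
    unfolding CK_isotopic[OF \<alpha> \<beta> KL range, symmetric] .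
qed

lemma latin_square_range:
  assumes "latin_square m K" "i \<in> {1..m}" "j \<in> {1..m}"
  shows "K i j \<in> {1..m}"
proof -
  have "bij_betw (K i) {1..m} {1..m}"
    using assms(1,2) unfolding latin_square_def by blast
  then show ?thesis
    using assms(3) bij_betwE by blast
qed

lemma latin_square_isotope:
  assumes "latin_square m K" and \<sigma>: "bij_betw \<sigma> {1..m} {1..m}" and \<tau>: "bij_betw \<tau> {1..m} {1..m}"
  shows "latin_square m (\<lambda>x y. K (\<sigma> x) (\<tau> y))"
  unfolding latin_square_def
proof (intro conjI ballI)
  fix x assume "x \<in> {1..m}"
  then have "bij_betw (K (\<sigma> x) \<circ> \<tau>) {1..m} {1..m}"
    using assms unfolding latin_square_def by (blast intro: bij_betw_trans dest: bij_betwE)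
  then show "bij_betw (\<lambda>y. K (\<sigma> x) (\<tau> y)) {1..m} {1..m}"
    by (simp add: comp_def)
next
  fix y assume "y \<in> {1..m}"
  then have "bij_betw ((\<lambda>i. K i (\<tau> y)) \<circ> \<sigma>) {1..m} {1..m}"
    using assms unfolding latin_square_def by (blast intro: bij_betw_trans dest: bij_betwE)
  then show "bij_betw (\<lambda>x. K (\<sigma> x) (\<tau> y)) {1..m} {1..m}"
    by (simp add: comp_def)
qed

definition reduced_latin_square :: "nat \<Rightarrow> (nat \<Rightarrow> nat \<Rightarrow> nat) \<Rightarrow> bool" where
  "reduced_latin_square m L \<longleftrightarrow>
     latin_square m L \<and> (\<forall>j\<in>{1..m}. L 1 j = j) \<and> (\<forall>i\<in>{1..m}. L i 1 = i)"

lemma latin_square_isotopic_reduced: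
  assumes K: "latin_square m K" and "1 \<le> m"
  obtains \<alpha> \<beta> L where "bij_betw \<alpha> {1..m} {1..m}" "bij_betw \<beta> {1..m} {1..m}"
    "\<forall>i\<in>{1..m}. \<forall>j\<in>{1..m}. K i j = L (\<alpha> i) (\<beta> j)" "reduced_latin_square m L"
proof -
  have one: "1 \<in> {1..m}" using \<open>1 \<le> m\<close> by simp
  have rows: "bij_betw (K i) {1..m} {1..m}" and columns: "bij_betw (\<lambda>i. K i j) {1..m} {1..m}"
    if "i \<in> {1..m}" "j \<in> {1..m}" for i j
    using K that unfolding latin_square_def by auto
  obtain c where c: "c \<in> {1..m}" "K 1 c = 1"
    using rows[OF one one] one by (metis bij_betw_iff_bijections)
  define \<alpha> where "\<alpha> i = K i c" for i
  define \<beta> where "\<beta> = K 1"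
  have \<alpha>: "bij_betw \<alpha> {1..m} {1..m}" and \<beta>: "bij_betw \<beta> {1..m} {1..m}"
    unfolding \<alpha>_def[abs_def] \<beta>_def using columns rows one c(1) by auto
  define \<alpha>' where "\<alpha>' = inv_into {1..m} \<alpha>"
  define \<beta>' where "\<beta>' = inv_into {1..m} \<beta>"
  have \<alpha>': "bij_betw \<alpha>' {1..m} {1..m}" "\<And>i. i \<in> {1..m} \<Longrightarrow> \<alpha>' (\<alpha> i) = i"
      "\<And>x. x \<in> {1..m} \<Longrightarrow> \<alpha> (\<alpha>' x) = x"
    using \<alpha> unfolding \<alpha>'_def
    by (simp_all add: bij_betw_inv_into bij_betw_inv_into_left bij_betw_inv_into_right)
  have \<beta>': "bij_betw \<beta>' {1..m} {1..m}" "\<And>j. j \<in> {1..m} \<Longrightarrow> \<beta>' (\<beta> j) = j"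
      "\<And>y. y \<in> {1..m} \<Longrightarrow> \<beta> (\<beta>' y) = y"
    using \<beta> unfolding \<beta>'_def
    by (simp_all add: bij_betw_inv_into bij_betw_inv_into_left bij_betw_inv_into_right)
  define L where "L = (\<lambda>x y. K (\<alpha>' x) (\<beta>' y))"
  have "latin_square m L"
    unfolding L_def by (rule latin_square_isotope[OF K \<alpha>'(1) \<beta>'(1)])
  moreover have "\<alpha>' 1 = 1" "\<beta>' 1 = c"
    using \<alpha>'(2)[OF one] \<beta>'(2)[OF c(1)] c(2) by (simp_all add: \<alpha>_def \<beta>_def)
  then have "\<forall>j\<in>{1..m}. L 1 j = j" "\<forall>i\<in>{1..m}. L i 1 = i"
    using \<alpha>'(3) \<beta>'(3) by (simp_all add: L_def \<alpha>_def \<beta>_def)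
  moreover have "\<forall>i\<in>{1..m}. \<forall>j\<in>{1..m}. K i j = L (\<alpha> i) (\<beta> j)"
    using \<alpha>'(2) \<beta>'(2) by (simp add: L_def)
  ultimately show ?thesis
    using that \<alpha> \<beta> unfolding reduced_latin_square_def by blast
qed

definition coords :: "int list list \<Rightarrow> nat \<Rightarrow> nat \<Rightarrow> int" where
  "coords V a k = V ! (a - 1) ! k"

(* Sorted pairs and triples suffice because cross and det3 are alternating; a sorted triple
   lies in C[T] iff it is (row a, column b = m + j, symbol c = 2m + T a j). *)
definition certifies :: "int list list \<Rightarrow> nat list list \<Rightarrow> nat \<Rightarrow> bool" where
  "certifies V T m \<longleftrightarrow>
     (\<forall>a\<in>set [1..<3 * m + 1]. \<forall>b\<in>set [a + 1..<3 * m + 1].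
        \<exists>k\<in>set [0, 1, 2]. cross (coords V) a b k \<noteq> 0) \<and>
     (\<forall>a\<in>set [1..<3 * m + 1]. \<forall>b\<in>set [a + 1..<3 * m + 1]. \<forall>c\<in>set [b + 1..<3 * m + 1].
        det3 (coords V) a b c = 0 \<longleftrightarrow>
        a \<le> m \<and> m < b \<and> b \<le> 2 * m \<and> c = 2 * m + T ! (a - 1) ! (b - m - 1))"

lemma cross_of_int: "cross (\<lambda>a k. of_int (w a k)) a b k = of_int (cross w a b k)"
  by (simp add: cross_def)

lemma det3_of_int: "det3 (\<lambda>a k. of_int (w a k)) a b c = of_int (det3 w a b c)"
  by (simp add: det3_def cross_def)

lemma certifies_pair:
  assumes "certifies V T m" "1 \<le> a" "a < b" "b \<le> 3 * m"
  shows "\<exists>k<3. cross (\<lambda>a k. real_of_int (coords V a k)) a b k \<noteq> 0"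
proof -
  have "a \<in> set [1..<3 * m + 1]" "b \<in> set [a + 1..<3 * m + 1]"
    using assms(2-4) by auto
  then obtain k where "k \<in> set [0, 1, 2]" "cross (coords V) a b k \<noteq> 0"
    using assms(1) unfolding certifies_def by blast
  then show ?thesis
    unfolding cross_of_int by (intro exI[of _ k]) auto
qed

lemma certifies_sorted_triple:
  assumes "certifies V T m"
    and range: "\<forall>i\<in>{1..m}. \<forall>j\<in>{1..m}. K i j \<in> {1..m}"
    and table: "\<forall>i\<in>{1..m}. \<forall>j\<in>{1..m}. K i j = T ! (i - 1) ! (j - 1)"
    and "1 \<le> a" "a < b" "b < c" "c \<le> 3 * m"
  shows "det3 (\<lambda>a k. real_of_int (coords V a k)) a b c = 0 \<longleftrightarrow> {a, b, c} \<in> CK m K"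
proof -
  have "a \<in> set [1..<3 * m + 1]" "b \<in> set [a + 1..<3 * m + 1]" "c \<in> set [b + 1..<3 * m + 1]"
    using assms(4-7) by auto
  then have "det3 (\<lambda>a k. real_of_int (coords V a k)) a b c = 0 \<longleftrightarrow>
      a \<le> m \<and> m < b \<and> b \<le> 2 * m \<and> c = 2 * m + T ! (a - 1) ! (b - m - 1)"
    using assms(1) unfolding certifies_def det3_of_int of_int_eq_0_iff by blast
  also have "\<dots> \<longleftrightarrow> a \<le> m \<and> m < b \<and> b \<le> 2 * m \<and> c = 2 * m + K a (b - m)"
  proof -
    have "K a (b - m) = T ! (a - 1) ! (b - m - 1)" if "a \<le> m" "m < b" "b \<le> 2 * m"
    proof -
      have "a \<in> {1..m}" "b - m \<in> {1..m}"
        using \<open>1 \<le> a\<close> that by auto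
      then show ?thesis
        using table by blast
    qed
    then show ?thesis
      by (auto simp: diff_diff_left)
  qed
  also have "\<dots> \<longleftrightarrow> {a, b, c} \<in> CK m K"
    using CK_sorted_iff[OF assms(5,6,4) range] by simp
  finally show ?thesis .
qed

lemma realizes_triples_of_certifies:
  assumes "certifies V T m"
    and "\<forall>i\<in>{1..m}. \<forall>j\<in>{1..m}. K i j \<in> {1..m}"
    and "\<forall>i\<in>{1..m}. \<forall>j\<in>{1..m}. K i j = T ! (i - 1) ! (j - 1)"
  shows "realizes_triples {1..3 * m} (CK m K) (\<lambda>a k. of_int (coords V a k))"
  using certifies_pair[OF assms(1)] certifies_sorted_triple[OF assms]
  by (intro realizes_triples_sortedI) auto

definition certificates :: "nat \<Rightarrow> (nat list list \<times> int list list) list" where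
  "certificates m =
    (if m = 1 then
      [([[1]], [[1, 0, 0], [0, 1, 0], [1, 1, 0]])]
     else if m = 2 then
      [([[1, 2], [2, 1]],
        [[-3, 2, 1], [2, -3, 8], [-2, 3, 1], [0, -1, 1], [4, 9, 1], [2, -3, 1]])]
     else if m = 3 then
      [([[1, 2, 3], [2, 3, 1], [3, 1, 2]],
        [[-4, 3, 1], [-1, -3, 1], [0, 1, 1], [14, -57, 1], [6, 17, 1], [10, -3, 8],
         [-51, -109, 27], [-380, 543, 125], [56, 111, 343]])]
     else if m = 4 then
      [([[1, 2, 3, 4], [2, 1, 4, 3], [3, 4, 1, 2], [4, 3, 2, 1]],
        [[-3, 4, 1], [7, -24, 1], [3, 8, 1], [-2, -3, 1], [10, -15, 8], [-145, 144, 125],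
         [-123, -80, 27], [49, 360, 1], [-6579, 8372, 4913], [18929, -37128, 12167],
         [7749, 40664, 343], [-9074, -8211, 2197]]),
       ([[1, 2, 3, 4], [2, 1, 4, 3], [3, 4, 2, 1], [4, 3, 1, 2]],
        [[-12, 30, 1], [-6, -15, 8], [-9, -27, 1], [-1, 3, 1], [324, -1647, 64], [48, 244, 27],
         [363, 7095, 1], [33, -645, 1331], [-1049412, -3503310, 753571],
         [-1540266, 5141955, 238328], [-235225, -430389, 15625], [-545625, 998325, 912673]]),
       ([[1, 2, 3, 4], [2, 3, 4, 1], [3, 4, 1, 2], [4, 1, 2, 3]],
        [[-12, 30, 1], [-9, -27, 1], [-6, -15, 8], [-1, 3, 1], [324, -1647, 64], [363, 7095, 1],
         [48, 244, 27], [33, -645, 1331], [-1049412, -3503310, 753571],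
         [-235225, -430389, 15625], [-1540266, 5141955, 238328], [-545625, 998325, 912673]]),
       ([[1, 2, 3, 4], [2, 4, 1, 3], [3, 1, 4, 2], [4, 3, 2, 1]],
        [[-12, 30, 1], [-9, -27, 1], [-1, 3, 1], [-6, -15, 8], [324, -1647, 64], [363, 7095, 1],
         [33, -645, 1331], [48, 244, 27], [-1049412, -3503310, 753571],
         [-235225, -430389, 15625], [-545625, 998325, 912673], [-1540266, 5141955, 238328]])]
     else [])"

lemma certificates_certify:
  assumes "(T, V) \<in> set (certificates m)"
  shows "certifies V T m"
proof -
  have "list_all (\<lambda>m. list_all (\<lambda>(T, V). certifies V T m) (certificates m)) [1, 2, 3, 4]"
    by code_simp
  moreover have "m \<in> {1, 2, 3, 4}"
    using assms by (auto simp: certificates_def split: if_splits)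
  ultimately show ?thesis
    using assms by (auto simp: list_all_iff)
qed

definition square_table :: "nat \<Rightarrow> (nat \<Rightarrow> nat \<Rightarrow> nat) \<Rightarrow> nat list list" where
  "square_table m L = map (\<lambda>i. map (L i) [1..<m + 1]) [1..<m + 1]"

lemma square_table_nth:
  assumes "i \<in> {1..m}" "j \<in> {1..m}"
  shows "square_table m L ! (i - 1) ! (j - 1) = L i j"
  using assms by (auto simp: square_table_def nth_upt simp del: upt_Suc)

lemma reduced_latin_square_lines:
  assumes "reduced_latin_square m L" "i \<in> {1..m}"
  shows "L 1 i = i" "L i 1 = i" "distinct (map (L i) [1..<m + 1])"
    "distinct (map (\<lambda>j. L j i) [1..<m + 1])" "set (map (L i) [1..<m + 1]) \<subseteq> {1..m}"
proof -
  show "L 1 i = i" "L i 1 = i"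
    using assms unfolding reduced_latin_square_def by auto
  have "bij_betw (L i) {1..m} {1..m}" "bij_betw (\<lambda>j. L j i) {1..m} {1..m}"
    using assms unfolding reduced_latin_square_def latin_square_def by auto
  moreover have "set [1..<m + 1] = {1..m}"
    by auto
  ultimately show "distinct (map (L i) [1..<m + 1])" "distinct (map (\<lambda>j. L j i) [1..<m + 1])"
    "set (map (L i) [1..<m + 1]) \<subseteq> {1..m}"
    by (simp_all add: distinct_map bij_betw_def)
qed

lemma reduced_latin_square_4_interior:
  fixes a22 a23 a24 a32 a33 a34 a42 a43 a44 :: nat
  assumes "a22 \<in> {1..4}" "a23 \<in> {1..4}" "a24 \<in> {1..4}" "a32 \<in> {1..4}" "a33 \<in> {1..4}"
    "a34 \<in> {1..4}" "a42 \<in> {1..4}" "a43 \<in> {1..4}" "a44 \<in> {1..4}"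
    "distinct [2, a22, a23, a24]" "distinct [3, a32, a33, a34]" "distinct [4, a42, a43, a44]"
    "distinct [2, a22, a32, a42]" "distinct [3, a23, a33, a43]" "distinct [4, a24, a34, a44]"
  shows "[[1, 2, 3, 4], [2, a22, a23, a24], [3, a32, a33, a34], [4, a42, a43, a44]]
    \<in> fst ` set (certificates 4)"
proof -
  have "x \<in> {1..4} \<longleftrightarrow> x = 1 \<or> x = 2 \<or> x = 3 \<or> x = 4" for x :: nat
    by auto
  then have "[a22, a23, a24, a32, a33, a34, a42, a43, a44] \<in>
      {[1, 4, 3, 4, 1, 2, 3, 2, 1], [1, 4, 3, 4, 2, 1, 3, 1, 2],
       [3, 4, 1, 4, 1, 2, 1, 2, 3], [4, 1, 3, 1, 4, 2, 3, 2, 1]}"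
    using assms by auto
  then show ?thesis
    by (auto simp: certificates_def)
qed

(* Stated with the sum unevaluated, to match [1..<m + 1] once m is replaced by a numeral. *)
lemma upt_1_numerals:
  "[1..<1 + 1] = [1]" "[1..<2 + 1] = [1, 2]" "[1..<3 + 1] = [1, 2, 3]" "[1..<4 + 1] = [1, 2, 3, 4]"
  by (simp_all add: upt_rec)

lemma reduced_latin_square_certified:
  assumes "reduced_latin_square m L" "m \<in> {1..4}"
  shows "square_table m L \<in> fst ` set (certificates m)"
proof -
  note lines = reduced_latin_square_lines[OF assms(1)]
  consider "m = 1" | "m = 2" | "m = 3" | "m = 4"
    using \<open>m \<in> {1..4}\<close> by force
  then show ?thesis
  proof cases
    case 1
    then show ?thesis
      using lines[of 1] unfolding square_table_def 1 upt_1_numerals by (simp add: certificates_def)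
  next
    case 2
    then have "square_table m L = [[1, 2], [2, L 2 2]]"
      using lines[of 1] lines[of 2] unfolding square_table_def 2 upt_1_numerals by simp
    moreover have "L 2 2 = 1"
      using lines[of 2] unfolding 2 upt_1_numerals by auto
    ultimately show ?thesis
      using 2 by (simp add: certificates_def)
  next
    case 3
    then have "square_table m L = [[1, 2, 3], [2, L 2 2, L 2 3], [3, L 3 2, L 3 3]]"
      using lines[of 1] lines[of 2] lines[of 3] unfolding square_table_def 3 upt_1_numerals by simp
    moreover have "L 2 2 = 3 \<and> L 2 3 = 1 \<and> L 3 2 = 1 \<and> L 3 3 = 2"
      using lines[of 2] lines[of 3] unfolding 3 upt_1_numerals by auto
    ultimately show ?thesis
      using 3 by (simp add: certificates_def)
  next
    case 4
    then have "square_table m L = [[1, 2, 3, 4], [2, L 2 2, L 2 3, L 2 4], [3, L 3 2, L 3 3, L 3 4],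
        [4, L 4 2, L 4 3, L 4 4]]"
      using lines[of 1] lines[of 2] lines[of 3] lines[of 4]
      unfolding square_table_def 4 upt_1_numerals by simp
    moreover have "\<dots> \<in> fst ` set (certificates 4)"
      by (rule reduced_latin_square_4_interior)
        (use lines[of 2] lines[of 3] lines[of 4] in \<open>unfold 4 upt_1_numerals, simp_all\<close>)
    ultimately show ?thesis
      using 4 by simp
  qed
qed

theorem mainTheorem8:
  fixes m :: nat and K :: "nat \<Rightarrow> nat \<Rightarrow> nat"
  assumes "1 \<le> m" and "m \<le> 4" and "latin_square m K"
  shows "\<exists>E indep. is_MK m K E indep \<and> real_realizable E indep"
proof -
  obtain \<alpha> \<beta> L where \<alpha>: "bij_betw \<alpha> {1..m} {1..m}" and \<beta>: "bij_betw \<beta> {1..m} {1..m}"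
    and KL: "\<forall>i\<in>{1..m}. \<forall>j\<in>{1..m}. K i j = L (\<alpha> i) (\<beta> j)" and L: "reduced_latin_square m L"
    using latin_square_isotopic_reduced[OF assms(3,1)] .
  obtain V where V: "(square_table m L, V) \<in> set (certificates m)"
    using reduced_latin_square_certified[OF L] assms(1,2) by force
  have range: "\<forall>i\<in>{1..m}. \<forall>j\<in>{1..m}. K i j \<in> {1..m}"
    "\<forall>i\<in>{1..m}. \<forall>j\<in>{1..m}. L i j \<in> {1..m}"
    using assms(3) L latin_square_range unfolding reduced_latin_square_def by blast+
  have "\<forall>i\<in>{1..m}. \<forall>j\<in>{1..m}. L i j = square_table m L ! (i - 1) ! (j - 1)"
    using square_table_nth by simp
  then have "realizes_triples {1..3 * m} (CK m L) (\<lambda>a k. of_int (coords V a k))"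
    by (rule realizes_triples_of_certifies[OF certificates_certify[OF V] range(2)])
  then have "realizes_triples {1..3 * m} (CK m K)
      (\<lambda>a k. of_int (coords V (isotopy_relabel m \<alpha> \<beta> a) k))"
    by (rule realizes_triples_isotopic[OF \<alpha> \<beta> KL range(1)])
  then show ?thesis
    by (rule realizable_MK_of_realizes_triples[OF assms(1) range(1)])
qed

end
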